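(* Let $N_1,\dots,N_d$ be positive integers and $X\subseteq[N_1]\times\cdots\times[N_d]$. For any power of two $s$ with $1\le s\le\min_{1\le i\le d}N_i$, \[ f(s,X)\le5^d\frac{N_1\cdots N_d}{s^{d+1}}|X|. \]
   Context: $[N]=\{1,\dots,N\}$. For $\mathbf{b}\in\mathbb{Z}^d\setminus\{\mathbf{0}\}$, points $\mathbf{x},\mathbf{x}'$ are congruent mod $\mathbf{b}$ if $\mathbf{x}-\mathbf{x}'\in\mathbb{Z}\mathbf{b}$. For each $\mathbf{b}\ne\mathbf{0}$ and each congruence class $I$ of $X$ modulo $\mathbf{b}$, list $I=\{\mathbf{x}_1,\dots,\mathbf{x}_l\}$ in increasing order of $\mathbf{x}_u\cdot\mathbf{b}$. $\mathcal{C}_X$ is the collection, over all such $(\mathbf{b},I)$, of the sets $\{\mathbf{x}_u:(j-1)s'+1\le u\le js'\}$ with $s'=2^t$ ($t\ge0$) and $1\le j\le\lfloor l/s'\rfloor$. $f(s,X)$ is the number of sets of size $s$ in $\mathcal{C}_X$. *)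

theory Defs
  imports Complex_Main
begin

(* Points of Z^d are integer lists of length d. *)

definition dotp :: "int list \<Rightarrow> int list \<Rightarrow> int" where
  "dotp x y = sum_list (map2 (*) x y)"

definition congr_mod :: "int list \<Rightarrow> int list \<Rightarrow> int list \<Rightarrow> bool" where
  "congr_mod b x x' \<longleftrightarrow> length x = length b \<and> length x' = length b \<and>
     (\<exists>k::int. \<forall>i<length b. x ! i - x' ! i = k * b ! i)"

definition cong_classes :: "int list \<Rightarrow> int list set \<Rightarrow> int list set set" where
  "cong_classes b X = {{y \<in> X. congr_mod b x y} | x. x \<in> X}"

(* position (1-indexed) of x in I when I is listed in increasing order of x \<bullet> b *)
definition rank_in :: "int list \<Rightarrow> int list set \<Rightarrow> int list \<Rightarrow> nat" where
  "rank_in b I x = card {y \<in> I. dotp y b \<le> dotp x b}"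

definition CX :: "nat \<Rightarrow> int list set \<Rightarrow> int list set set" where
  "CX d X = {S. \<exists>b I (t::nat) (j::nat).
      length b = d \<and> b \<noteq> replicate d 0 \<and> I \<in> cong_classes b X \<and>
      1 \<le> j \<and> j \<le> card I div 2 ^ t \<and>
      S = {x \<in> I. (j - 1) * 2 ^ t + 1 \<le> rank_in b I x \<and> rank_in b I x \<le> j * 2 ^ t}}"

definition fcount :: "nat \<Rightarrow> nat \<Rightarrow> int list set \<Rightarrow> nat" where
  "fcount d s X = card {S \<in> CX d X. card S = s}"

end

theory Submission
  imports Defs "HOL-Library.FuncSet"
begin

(* Fix a nonzero direction b. Blocks of equal size inside one congruence class are cut from
   the same partition of its ranks, so the blocks of size s along b are pairwise disjoint
   subsets of X and there are at most |X|/s of them. A block of size s >= 2 contains two points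
   differing by k b with k >= s - 1, which forces |b_i| (s - 1) <= N_i - 1; so b ranges over a
   box with prod_i (2 floor((N_i - 1)/(s - 1)) + 1) <= prod_i 5 N_i / s points. For s = 1 the
   blocks are singletons of X. *)

lemma bij_betw_lists_nth_PiE:
  "bij_betw (\<lambda>xs. restrict (nth xs) {..<n}) {xs. length xs = n \<and> (\<forall>i<n. xs ! i \<in> A i)} (PiE {..<n} A)"
  by (rule bij_betw_byWitness[where f' = "\<lambda>f. map f [0..<n]"])
    (auto simp: PiE_def extensional_def intro: nth_equalityI)

lemma finite_lists_nth_mem:
  assumes "\<And>i. i < n \<Longrightarrow> finite (A i)"
  shows "finite {xs. length xs = n \<and> (\<forall>i<n. xs ! i \<in> A i)}"
proof -
  have "finite (PiE {..<n} A)" using assms by (intro finite_PiE) auto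
  then show ?thesis using bij_betw_finite[OF bij_betw_lists_nth_PiE] by blast
qed

lemma card_lists_nth_mem:
  "card {xs. length xs = n \<and> (\<forall>i<n. xs ! i \<in> A i)} = (\<Prod>i<n. card (A i))"
  using bij_betw_same_card[OF bij_betw_lists_nth_PiE] by (simp add: card_PiE)

lemma bij_betw_rank:
  fixes g :: "'a \<Rightarrow> 'b::linorder"
  assumes "finite I" "inj_on g I"
  shows "bij_betw (\<lambda>x. card {y \<in> I. g y \<le> g x}) I {1..card I}"
proof -
  let ?r = "\<lambda>x. card {y \<in> I. g y \<le> g x}"
  have less: "?r y < ?r z" if "y \<in> I" "z \<in> I" "g y < g z" for y z
  proof (rule psubset_card_mono)
    have "z \<in> {w \<in> I. g w \<le> g z} - {w \<in> I. g w \<le> g y}" using that by auto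
    then show "{w \<in> I. g w \<le> g y} \<subset> {w \<in> I. g w \<le> g z}"
      using that by auto
  qed (use assms(1) in auto)
  have inj: "inj_on ?r I"
  proof (rule inj_onI)
    fix y z assume yz: "y \<in> I" "z \<in> I" "?r y = ?r z"
    have "g y = g z"
    proof (rule ccontr)
      assume "g y \<noteq> g z"
      then have "g y < g z \<or> g z < g y" by auto
      then show False using less[of y z] less[of z y] yz by auto
    qed
    then show "y = z" using inj_onD[OF assms(2)] yz by blast
  qed
  have "?r x \<in> {1..card I}" if "x \<in> I" for x
  proof -
    have "x \<in> {y \<in> I. g y \<le> g x}" using that by simp
    then have "0 < ?r x" using assms(1) by (auto simp: card_gt_0_iff)
    moreover have "?r x \<le> card I" using assms(1) by (intro card_mono) auto
    ultimately show ?thesis by simp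
  qed
  moreover have "card (?r ` I) = card {1..card I}" using card_image[OF inj] by simp
  ultimately have "?r ` I = {1..card I}" by (intro card_subset_eq) auto
  with inj show ?thesis by (simp add: bij_betw_def)
qed

definition rank_block :: "('a \<Rightarrow> nat) \<Rightarrow> 'a set \<Rightarrow> nat \<Rightarrow> nat \<Rightarrow> 'a set" where
  "rank_block r I p j = {x \<in> I. (j - 1) * p + 1 \<le> r x \<and> r x \<le> j * p}"

lemma card_rank_block:
  assumes "bij_betw r I {1..card I}" "1 \<le> j" "j * p \<le> card I"
  shows "card (rank_block r I p j) = p"
proof -
  let ?B = "rank_block r I p j"
  have "r ` ?B = {(j - 1) * p + 1..j * p}"
  proof
    show "r ` ?B \<subseteq> {(j - 1) * p + 1..j * p}" unfolding rank_block_def by auto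
    show "{(j - 1) * p + 1..j * p} \<subseteq> r ` ?B"
    proof
      fix k assume k: "k \<in> {(j - 1) * p + 1..j * p}"
      then have "k \<in> r ` I"
        using assms(3) bij_betw_imp_surj_on[OF assms(1)] by auto
      then show "k \<in> r ` ?B" using k unfolding rank_block_def by auto
    qed
  qed
  moreover have "inj_on r ?B"
    using bij_betw_imp_inj_on[OF assms(1)] by (rule inj_on_subset) (auto simp: rank_block_def)
  ultimately have "card ?B = card {(j - 1) * p + 1..j * p}" by (metis card_image)
  also have "\<dots> = p" using assms(2) by (cases j) auto
  finally show ?thesis .
qed

lemma rank_block_index_unique:
  assumes "x \<in> rank_block r I p j" "x \<in> rank_block r I p j'"
  shows "j = j'"
proof -
  have "\<not> i < i'" if "x \<in> rank_block r I p i" "x \<in> rank_block r I p i'" for i i'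
  proof
    assume "i < i'"
    then have "i * p \<le> (i' - 1) * p" by (intro mult_right_mono) auto
    moreover have "r x \<le> i * p" "(i' - 1) * p + 1 \<le> r x"
      using that unfolding rank_block_def by auto
    ultimately show False by linarith
  qed
  then show ?thesis using assms by (meson linorder_neq_iff)
qed

lemma congr_mod_sym:
  assumes "congr_mod b x y"
  shows "congr_mod b y x"
proof -
  obtain k where "\<forall>i<length b. x ! i - y ! i = k * b ! i"
    using assms unfolding congr_mod_def by blast
  then have "\<forall>i<length b. y ! i - x ! i = - k * b ! i" by (simp add: algebra_simps)
  then show ?thesis using assms unfolding congr_mod_def by blast
qed

lemma congr_mod_trans:
  assumes "congr_mod b x y" "congr_mod b y z"
  shows "congr_mod b x z"
proof -
  obtain k l where "\<forall>i<length b. x ! i - y ! i = k * b ! i" "\<forall>i<length b. y ! i - z ! i = l * b ! i"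
    using assms unfolding congr_mod_def by blast
  then have "\<forall>i<length b. x ! i - z ! i = (k + l) * b ! i"
    by (simp add: algebra_simps)
  then show ?thesis using assms unfolding congr_mod_def by blast
qed

lemma cong_class_eq:
  assumes "I \<in> cong_classes b X" "y \<in> I"
  shows "I = {z \<in> X. congr_mod b y z}"
proof -
  obtain x where x: "I = {z \<in> X. congr_mod b x z}"
    using assms(1) unfolding cong_classes_def by blast
  then have "congr_mod b x y" "congr_mod b y x" using assms(2) congr_mod_sym by auto
  then show ?thesis unfolding x by (blast intro: congr_mod_trans)
qed

lemma cong_class_subset: "I \<in> cong_classes b X \<Longrightarrow> I \<subseteq> X"
  unfolding cong_classes_def by auto

lemma cong_class_congr_mod:
  "I \<in> cong_classes b X \<Longrightarrow> y \<in> I \<Longrightarrow> z \<in> I \<Longrightarrow> congr_mod b y z"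
  using cong_class_eq by blast

lemma dotp_eq_sum:
  "length x = length b \<Longrightarrow> dotp x b = (\<Sum>i<length b. x ! i * b ! i)"
  by (simp add: dotp_def sum_list_sum_nth atLeast0LessThan)

lemma congr_mod_dotp_inj:
  assumes "congr_mod b y z" "b \<noteq> replicate (length b) 0" "dotp y b = dotp z b"
  shows "y = z"
proof -
  obtain k where len: "length y = length b" "length z = length b"
    and k: "\<forall>i<length b. y ! i - z ! i = k * b ! i"
    using assms(1) unfolding congr_mod_def by auto
  obtain i0 where i0: "i0 < length b" "b ! i0 \<noteq> 0"
    using assms(2) by (metis in_set_conv_nth replicate_eqI)
  have "0 < b ! i0 * b ! i0" using i0 by (simp add: zero_less_mult_iff linorder_neq_iff disj_commute)
  also have "\<dots> \<le> (\<Sum>i<length b. b ! i * b ! i)"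
    using i0 by (intro member_le_sum) auto
  finally have norm_pos: "0 < (\<Sum>i<length b. b ! i * b ! i)" .
  have "0 = dotp y b - dotp z b" using assms(3) by simp
  also have "\<dots> = (\<Sum>i<length b. (y ! i - z ! i) * b ! i)"
    using len by (simp add: dotp_eq_sum left_diff_distrib sum_subtractf)
  also have "\<dots> = k * (\<Sum>i<length b. b ! i * b ! i)"
    using k by (simp add: sum_distrib_left mult.assoc)
  finally have "k = 0" using norm_pos by simp
  then show ?thesis using len k by (intro nth_equalityI) auto
qed

lemma bij_betw_rank_in:
  assumes "I \<in> cong_classes b X" "finite X" "b \<noteq> replicate (length b) 0"
  shows "bij_betw (rank_in b I) I {1..card I}"
proof -
  have "finite I" using cong_class_subset[OF assms(1)] assms(2) by (rule finite_subset)
  moreover have "inj_on (\<lambda>y. dotp y b) I"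
    using congr_mod_dotp_inj[OF cong_class_congr_mod[OF assms(1)] assms(3)] by (auto intro: inj_onI)
  ultimately have "bij_betw (\<lambda>x. card {y \<in> I. dotp y b \<le> dotp x b}) I {1..card I}"
    by (rule bij_betw_rank)
  then show ?thesis unfolding rank_in_def .
qed

definition blocks_along :: "int list \<Rightarrow> int list set \<Rightarrow> int list set set" where
  "blocks_along b X = {rank_block (rank_in b I) I (2 ^ t) j | I t j.
     I \<in> cong_classes b X \<and> 1 \<le> j \<and> j \<le> card I div 2 ^ t}"

lemma CX_eq_Union_blocks_along:
  "CX d X = (\<Union>b \<in> {b. length b = d \<and> b \<noteq> replicate d 0}. blocks_along b X)"
  unfolding CX_def blocks_along_def rank_block_def by auto

lemma blocks_along_subset: "S \<in> blocks_along b X \<Longrightarrow> S \<subseteq> X"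
  unfolding blocks_along_def rank_block_def using cong_class_subset by blast

lemma blocks_along_same_size_disjoint:
  assumes "finite X" "b \<noteq> replicate (length b) 0"
    and "S \<in> blocks_along b X" "S' \<in> blocks_along b X" "card S = card S'" "x \<in> S" "x \<in> S'"
  shows "S = S'"
proof -
  obtain I t j where I: "I \<in> cong_classes b X" "1 \<le> j" "j \<le> card I div 2 ^ t"
    and S: "S = rank_block (rank_in b I) I (2 ^ t) j"
    using assms(3) unfolding blocks_along_def by blast
  obtain I' t' j' where I': "I' \<in> cong_classes b X" "1 \<le> j'" "j' \<le> card I' div 2 ^ t'"
    and S': "S' = rank_block (rank_in b I') I' (2 ^ t') j'"
    using assms(4) unfolding blocks_along_def by blast
  have "x \<in> I" "x \<in> I'" using assms(6,7) unfolding S S' rank_block_def by auto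
  then have "I' = I" using cong_class_eq[OF I(1)] cong_class_eq[OF I'(1)] by metis
  note rank = bij_betw_rank_in[OF I(1) assms(1,2)]
  have "j * 2 ^ t \<le> card I" "j' * 2 ^ t' \<le> card I"
    using I(3) I'(3) \<open>I' = I\<close> by (simp_all add: less_eq_div_iff_mult_less_eq)
  then have "card S = 2 ^ t" "card S' = 2 ^ t'"
    unfolding S S' \<open>I' = I\<close> using card_rank_block[OF rank] I(2) I'(2) by blast+
  then have "t' = t" using assms(5) by simp
  then have "j = j'"
    using rank_block_index_unique assms(6,7) \<open>I' = I\<close> unfolding S S' by simp
  then show ?thesis unfolding S S' \<open>I' = I\<close> \<open>t' = t\<close> by simp
qed

lemma card_blocks_along_of_size:
  assumes "finite X" "b \<noteq> replicate (length b) 0"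
  shows "card {S \<in> blocks_along b X. card S = s} * s \<le> card X"
proof -
  let ?F = "{S \<in> blocks_along b X. card S = s}"
  have sub: "\<Union>?F \<subseteq> X" using blocks_along_subset by blast
  have "card ?F * s = (\<Sum>S\<in>?F. card S)" by simp
  also have "\<dots> = card (\<Union>?F)"
  proof (rule card_Union_disjoint[symmetric])
    show "pairwise disjnt ?F"
    proof (rule pairwiseI)
      fix S S' assume "S \<in> ?F" "S' \<in> ?F" "S \<noteq> S'"
      then have "S \<in> blocks_along b X" "S' \<in> blocks_along b X" "card S = card S'" by simp_all
      with \<open>S \<noteq> S'\<close> show "disjnt S S'"
        using blocks_along_same_size_disjoint[OF assms] unfolding disjnt_def by blast
    qed
    show "finite S" if "S \<in> ?F" for S
      using that sub by (blast intro: finite_subset[OF _ assms(1)])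
  qed
  also have "\<dots> \<le> card X" using sub assms(1) by (rule card_mono[rotated])
  finally show ?thesis .
qed

lemma congruent_set_spread:
  assumes "finite S" "S \<noteq> {}" "\<And>y z. y \<in> S \<Longrightarrow> z \<in> S \<Longrightarrow> congr_mod b y z"
    and "b \<noteq> replicate (length b) 0"
  obtains y z k where "y \<in> S" "z \<in> S" "int (card S) - 1 \<le> k" "\<forall>i<length b. y ! i - z ! i = k * b ! i"
proof -
  obtain x0 where x0: "x0 \<in> S" using assms(2) by blast
  obtain i0 where i0: "i0 < length b" "b ! i0 \<noteq> 0"
    using assms(4) by (metis in_set_conv_nth replicate_eqI)
  (* S = {x0 - k b | k \<in> K}, and the extreme parameters in K are at least card S - 1 apart. *)
  define v where "v k = map (\<lambda>i. x0 ! i - k * b ! i) [0..<length b]" for k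
  define K where "K = v -` S"
  have "inj v"
  proof (rule injI)
    fix k k' assume "v k = v k'"
    then have "v k ! i0 = v k' ! i0" by simp
    then show "k = k'" using i0 by (simp add: v_def)
  qed
  have "S = v ` K"
  proof
    show "v ` K \<subseteq> S" unfolding K_def by auto
    show "S \<subseteq> v ` K"
    proof
      fix y assume "y \<in> S"
      then obtain k where "length x0 = length b" "length y = length b"
        "\<forall>i<length b. x0 ! i - y ! i = k * b ! i"
        using assms(3)[OF x0] unfolding congr_mod_def by blast
      then have "y = v k" by (intro nth_equalityI) (auto simp: v_def algebra_simps)
      then show "y \<in> v ` K" using \<open>y \<in> S\<close> unfolding K_def by auto
    qed
  qed
  with \<open>inj v\<close> assms(1,2) have K: "finite K" "K \<noteq> {}" "card K = card S"
    by (auto simp: finite_image_iff card_image inj_on_subset)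
  then have "Min K \<in> K" "Max K \<in> K" "Min K \<le> Max K" by simp_all
  then have ends: "v (Min K) \<in> S" "v (Max K) \<in> S" unfolding K_def by simp_all
  have "K \<subseteq> {Min K..Max K}" using K(1) by auto
  then have "card S \<le> card {Min K..Max K}" using K(3) by (metis card_mono finite_atLeastAtMost_int)
  then have spread: "int (card S) - 1 \<le> Max K - Min K"
    using \<open>Min K \<le> Max K\<close> by (simp add: le_nat_iff)
  have "\<forall>i<length b. v (Min K) ! i - v (Max K) ! i = (Max K - Min K) * b ! i"
    by (simp add: v_def algebra_simps)
  with ends spread show thesis by (rule that)
qed

lemma abs_le_of_nat_div:
  fixes a :: int
  assumes "0 < m" "\<bar>a\<bar> * int m \<le> int n"
  shows "\<bar>a\<bar> \<le> int (n div m)"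
proof -
  have "int (nat \<bar>a\<bar> * m) \<le> int n" using assms(2) by simp
  then have "nat \<bar>a\<bar> \<le> n div m" using assms(1) by (simp only: of_nat_le_iff less_eq_div_iff_mult_less_eq)
  then show ?thesis by linarith
qed

definition grid :: "nat list \<Rightarrow> int list set" where
  "grid N = {x. length x = length N \<and> (\<forall>i<length N. 1 \<le> x ! i \<and> x ! i \<le> int (N ! i))}"

lemma finite_grid: "finite (grid N)"
proof -
  have "grid N = {x. length x = length N \<and> (\<forall>i<length N. x ! i \<in> {1..int (N ! i)})}"
    unfolding grid_def by auto
  show ?thesis unfolding \<open>grid N = _\<close> by (rule finite_lists_nth_mem) simp
qed

lemma blocks_along_direction_bound:
  assumes "X \<subseteq> grid N" "length b = length N" "b \<noteq> replicate (length b) 0"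
    and "S \<in> blocks_along b X" "2 \<le> card S" "i < length N"
  shows "\<bar>b ! i\<bar> \<le> int ((N ! i - 1) div (card S - 1))"
proof -
  obtain I where I: "I \<in> cong_classes b X" "S \<subseteq> I"
    using assms(4) unfolding blocks_along_def rank_block_def by blast
  have "finite S" "S \<noteq> {}" using assms(5) by (auto intro: card_ge_0_finite)
  moreover have "\<And>y z. y \<in> S \<Longrightarrow> z \<in> S \<Longrightarrow> congr_mod b y z"
    using cong_class_congr_mod[OF I(1)] I(2) by blast
  ultimately obtain y z k where yz: "y \<in> S" "z \<in> S" "int (card S) - 1 \<le> k"
    and diff: "\<forall>i<length b. y ! i - z ! i = k * b ! i"
    using congruent_set_spread assms(3) by metis
  have "y \<in> grid N" "z \<in> grid N" using yz I(2) cong_class_subset[OF I(1)] assms(1) by auto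
  then have "1 \<le> y ! i" "y ! i \<le> int (N ! i)" "1 \<le> z ! i" "z ! i \<le> int (N ! i)"
    using assms(6) unfolding grid_def by auto
  moreover have "y ! i - z ! i = k * b ! i" using diff assms(2,6) by simp
  ultimately have "\<bar>k * b ! i\<bar> \<le> int (N ! i) - 1" by linarith
  moreover have "\<bar>b ! i\<bar> * (int (card S) - 1) \<le> \<bar>k * b ! i\<bar>"
    using mult_right_mono[OF yz(3), of "\<bar>b ! i\<bar>"] yz(3) assms(5) by (simp add: abs_mult mult.commute)
  ultimately have "\<bar>b ! i\<bar> * int (card S - 1) \<le> int (N ! i - 1)"
    using assms(5) \<open>1 \<le> y ! i\<close> \<open>y ! i \<le> int (N ! i)\<close> by (simp add: of_nat_diff)
  then show ?thesis using assms(5) by (intro abs_le_of_nat_div) auto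
qed

lemma fcount_mult_le_card_directions:
  assumes "finite X" "finite D"
    and "\<And>b S. length b = d \<Longrightarrow> b \<noteq> replicate d 0 \<Longrightarrow> S \<in> blocks_along b X \<Longrightarrow> card S = s \<Longrightarrow> b \<in> D"
  shows "fcount d s X * s \<le> card D * card X"
proof -
  let ?D = "D \<inter> {b. length b = d \<and> b \<noteq> replicate d 0}"
  let ?F = "\<lambda>b. {S \<in> blocks_along b X. card S = s}"
  have "{S \<in> CX d X. card S = s} \<subseteq> (\<Union>b\<in>?D. ?F b)"
  proof
    fix S assume "S \<in> {S \<in> CX d X. card S = s}"
    then obtain b where "length b = d" "b \<noteq> replicate d 0" "S \<in> blocks_along b X" "card S = s"
      unfolding CX_eq_Union_blocks_along by auto
    with assms(3) show "S \<in> (\<Union>b\<in>?D. ?F b)" by auto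
  qed
  moreover have "finite (\<Union>b\<in>?D. ?F b)"
  proof (rule finite_subset)
    show "(\<Union>b\<in>?D. ?F b) \<subseteq> Pow X" using blocks_along_subset by auto
  qed (use assms(1) in simp)
  ultimately have "fcount d s X \<le> card (\<Union>b\<in>?D. ?F b)"
    unfolding fcount_def by (rule card_mono[rotated])
  also have "\<dots> \<le> (\<Sum>b\<in>?D. card (?F b))"
    using assms(2) by (intro card_UN_le) simp
  finally have "fcount d s X * s \<le> (\<Sum>b\<in>?D. card (?F b)) * s"
    by (rule mult_le_mono1)
  also have "\<dots> = (\<Sum>b\<in>?D. card (?F b) * s)" by (rule sum_distrib_right)
  also have "\<dots> \<le> (\<Sum>b\<in>?D. card X)"
    using card_blocks_along_of_size[OF assms(1)] by (intro sum_mono) simp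
  also have "\<dots> \<le> card D * card X"
    using assms(2) by (simp add: card_mono)
  finally show ?thesis .
qed

lemma fcount_one_le_card: "finite X \<Longrightarrow> fcount d 1 X \<le> card X"
proof -
  assume "finite X"
  have "{S \<in> CX d X. card S = 1} \<subseteq> (\<lambda>x. {x}) ` X"
  proof
    fix S assume "S \<in> {S \<in> CX d X. card S = 1}"
    then have "S \<in> CX d X" "card S = 1" by simp_all
    from \<open>S \<in> CX d X\<close> obtain b where "S \<in> blocks_along b X"
      unfolding CX_eq_Union_blocks_along by auto
    then have "S \<subseteq> X" by (rule blocks_along_subset)
    moreover obtain x where "S = {x}" using \<open>card S = 1\<close> by (rule card_1_singletonE)
    ultimately show "S \<in> (\<lambda>x. {x}) ` X" by blast
  qed
  then have "fcount d 1 X \<le> card ((\<lambda>x. {x}) ` X)"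
    unfolding fcount_def using \<open>finite X\<close> by (intro card_mono) auto
  also have "\<dots> \<le> card X" by (rule card_image_le[OF \<open>finite X\<close>])
  finally show ?thesis .
qed

lemma odd_side_mult_le:
  fixes n s :: nat
  assumes "2 \<le> s" "s \<le> n"
  shows "(2 * ((n - 1) div (s - 1)) + 1) * s \<le> 5 * n"
proof -
  define c where "c = (n - 1) div (s - 1)"
  have "c * (s - 1) \<le> n - 1" unfolding c_def by (rule div_times_less_eq_dividend)
  moreover have "c * 1 \<le> c * (s - 1)" using assms(1) by (intro mult_le_mono2) linarith
  moreover have "(2 * c + 1) * s = 2 * (c * (s - 1)) + 2 * c + s"
    using assms(1) by (cases s) (auto simp: algebra_simps)
  ultimately show ?thesis unfolding c_def[symmetric] using assms by linarith
qed

lemma prod_odd_sides_le: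
  fixes s :: nat
  assumes "2 \<le> s" "\<forall>i<length N. s \<le> N ! i"
  shows "(\<Prod>i<length N. 2 * ((N ! i - 1) div (s - 1)) + 1) * s ^ length N \<le> 5 ^ length N * prod_list N"
proof -
  have "(\<Prod>i<length N. 2 * ((N ! i - 1) div (s - 1)) + 1) * s ^ length N
      = (\<Prod>i<length N. (2 * ((N ! i - 1) div (s - 1)) + 1) * s)"
    by (simp only: prod.distrib prod_constant card_lessThan)
  also have "\<dots> \<le> (\<Prod>i<length N. 5 * N ! i)"
    using odd_side_mult_le assms by (intro prod_mono) auto
  also have "\<dots> = 5 ^ length N * prod_list N"
    by (simp add: prod.distrib prod.list_conv_set_nth atLeast0LessThan)
  finally show ?thesis .
qed

lemma fcount_mult_pow_le:
  assumes "X \<subseteq> grid N" "2 \<le> s" "\<forall>i<length N. s \<le> N ! i"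
  shows "fcount (length N) s X * s ^ (length N + 1) \<le> 5 ^ length N * prod_list N * card X"
proof -
  define c where "c i = (N ! i - 1) div (s - 1)" for i
  define D where "D = {b. length b = length N \<and> (\<forall>i<length N. b ! i \<in> {- int (c i)..int (c i)})}"
  have "finite X" using assms(1) finite_grid by (rule finite_subset)
  have "fcount (length N) s X * s \<le> card D * card X"
  proof (rule fcount_mult_le_card_directions[OF \<open>finite X\<close>])
    show "finite D" unfolding D_def by (rule finite_lists_nth_mem) simp
    fix b S
    assume b: "length b = length N" "b \<noteq> replicate (length N) 0"
      and S: "S \<in> blocks_along b X" "card S = s"
    have "b ! i \<in> {- int (c i)..int (c i)}" if "i < length N" for i
    proof -
      have "\<bar>b ! i\<bar> \<le> int (c i)"
        using blocks_along_direction_bound[OF assms(1) b(1) _ S(1) _ that] b S(2) assms(2)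
        unfolding c_def by simp
      then show ?thesis by (simp add: abs_le_iff)
    qed
    then show "b \<in> D" using b(1) unfolding D_def by blast
  qed
  moreover have "card D = (\<Prod>i<length N. 2 * c i + 1)"
    unfolding D_def card_lists_nth_mem by (simp add: nat_add_distrib nat_mult_distrib)
  ultimately have "fcount (length N) s X * s ^ (length N + 1) \<le> ((\<Prod>i<length N. 2 * c i + 1) * s ^ length N) * card X"
    by (simp add: algebra_simps mult_le_mono1)
  also have "\<dots> \<le> 5 ^ length N * prod_list N * card X"
    using prod_odd_sides_le[OF assms(2,3)] unfolding c_def by (rule mult_le_mono1)
  finally show ?thesis .
qed

theorem corollary2p4:
  fixes d :: nat and N :: "nat list" and X :: "int list set" and s :: nat
  assumes "length N = d"
    and "\<forall>i<d. 0 < N ! i"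
    and "X \<subseteq> {x. length x = d \<and> (\<forall>i<d. 1 \<le> x ! i \<and> x ! i \<le> int (N ! i))}"
    and "\<exists>t::nat. s = 2 ^ t"
    and "1 \<le> s"
    and "\<forall>i<d. s \<le> N ! i"
  shows "real (fcount d s X) \<le> 5 ^ d * real (prod_list N) / real s ^ (d + 1) * real (card X)"
proof -
  have X: "X \<subseteq> grid N" using assms(1,3) unfolding grid_def by auto
  have "fcount d s X * s ^ (d + 1) \<le> 5 ^ d * prod_list N * card X"
  proof (cases "s = 1")
    case True
    have "0 \<notin> set N" using assms(1,2) by (auto simp: in_set_conv_nth)
    then have "prod_list N \<noteq> 0" by (simp add: prod_list_zero_iff)
    then have "1 \<le> 5 ^ d * prod_list N" by simp
    then have "card X \<le> 5 ^ d * prod_list N * card X" by simp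
    with True show ?thesis
      using order_trans[OF fcount_one_le_card[OF finite_subset[OF X finite_grid]]] by simp
  next
    case False
    then show ?thesis using fcount_mult_pow_le[OF X] assms(1,5,6) by simp
  qed
  then have "real (fcount d s X) * real s ^ (d + 1) \<le> 5 ^ d * real (prod_list N) * real (card X)"
    unfolding of_nat_le_iff[where 'a = real, symmetric] by simp
  then show ?thesis using assms(5) by (simp add: pos_le_divide_eq)
qed

end
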